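(* Let $N\ge 2$ and consider the interconnected uncertain system with state $x=(x_{11},x_{12},x_{21},x_{22},\dots,x_{N1},x_{N2})\in\mathbb{R}^{2N}$, known input $u\in\mathbb{R}^m$, unknown input $w\in\mathbb{R}^N$ and measured output $y=(x_{11},x_{21},\dots,x_{N1})^\top\in\mathbb{R}^N$, given for $i=1,\dots,N$ by \[ \dot x_{i1}=f_{i1}(y,u,x_{12},\dots,x_{(i-1)2})+g_i(y,u,t)\,x_{i2},\qquad \dot x_{i2}=f_{i2}(x,u)+\delta_i(x,u,w,t), \] where $f_{11}=f_{11}(y,u)$ (no dependence on any $x_{j2}$), the $f_{i1}$ are known continuous functions, the $f_{i2}$ are known, possibly discontinuous or multivalued functions, the $\delta_i$ are unknown uncertainty terms, and the $g_i$ are known continuous functions satisfying $0<g_{i,m}\le g_i(y,u,t)\le g_{i,M}$ for some constants $g_{i,m},g_{i,M}$. Assume the system has solutions in the sense of Filippov. Then this system is globally strongly observable.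
   Context: A system with known input $u$, unknown input (here the uncertainty terms $\delta_i$), and output $y$ is called strongly observable if the state $x$ can be recovered from the known input $u$ and the measured output $y$ together with their time derivatives, regardless of the unknown input; it is globally strongly observable if this holds on the whole state space, i.e. the map $(x,u)\mapsto(y,\dot y,\dots)$ obtained from the output and its derivatives does not depend on the unknown input and is globally invertible in $x$ for every $u\in\mathbb{R}^m$. *)

theory Defs
  imports "HOL-Analysis.Analysis"
begin

text \<open>State x = (x1, x2) with x1 = (x_11,...,x_N1), x2 = (x_12,...,x_N2), indices in a
finite well-ordered type 'n with CARD('n) = N.  Output y = x1.\<close>

definition sys_rhs ::
  "('n::{finite,wellorder} \<Rightarrow> (real, 'n) vec \<Rightarrow> (real, 'm) vec \<Rightarrow> (real, 'n) vec \<Rightarrow> real)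
   \<Rightarrow> ('n \<Rightarrow> (real, 'n) vec \<times> (real, 'n) vec \<Rightarrow> (real, 'm) vec \<Rightarrow> real set)
   \<Rightarrow> ('n \<Rightarrow> (real, 'n) vec \<Rightarrow> (real, 'm) vec \<Rightarrow> real \<Rightarrow> real)
   \<Rightarrow> ('n \<Rightarrow> (real, 'n) vec \<times> (real, 'n) vec \<Rightarrow> (real, 'm) vec \<Rightarrow> (real, 'n) vec \<Rightarrow> real \<Rightarrow> real)
   \<Rightarrow> (real, 'n) vec \<times> (real, 'n) vec \<Rightarrow> (real, 'm) vec \<Rightarrow> (real, 'n) vec \<Rightarrow> real \<Rightarrow> ((real, 'n) vec \<times> (real, 'n) vec) set"
  where "sys_rhs f1 f2 g \<delta> x u w t =
    {(v1, v2). (\<forall>i. v1 $ i = f1 i (fst x) u (snd x) + g i (fst x) u t * (snd x $ i)) \<and>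
               (\<forall>i. v2 $ i \<in> (\<lambda>a. a + \<delta> i x u w t) ` f2 i x u)}"

text \<open>Global strong observability for a system with output y = fst x: the map
  (x,u,t) \<mapsto> (y, dy/dt) (where dy/dt = fst v for any admissible velocity v) is
  well defined independently of the unknown input w (and of the choice of v), and for
  every u (and t) it is a global bijection in x.\<close>
definition globally_strongly_observable ::
  "((real, 'n) vec \<times> (real, 'n) vec \<Rightarrow> (real, 'm) vec \<Rightarrow> (real, 'n) vec \<Rightarrow> real \<Rightarrow> ((real, 'n) vec \<times> (real, 'n) vec) set) \<Rightarrow> bool"
  where "globally_strongly_observable rhs \<longleftrightarrow>
    (\<exists>\<Phi> :: (real, 'n) vec \<times> (real, 'n) vec \<Rightarrow> (real, 'm) vec \<Rightarrow> real \<Rightarrow> (real, 'n) vec \<times> (real, 'n) vec.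
       (\<forall>x u w t v. v \<in> rhs x u w t \<longrightarrow> (fst x, fst v) = \<Phi> x u t) \<and>
       (\<forall>u t. bij (\<lambda>x. \<Phi> x u t)))"

end

theory Submission
  imports Defs
begin

text \<open>The output derivative \<open>dy\<^sub>i/dt = f\<^sub>i\<^sub>1(y, u, x\<^sub>1\<^sub>2, ..., x\<^sub>i\<^sub>-\<^sub>1\<^sub>,\<^sub>2) + g\<^sub>i(y, u, t) x\<^sub>i\<^sub>2\<close>
  does not involve the unknown terms \<open>\<delta>\<^sub>i\<close>. For fixed \<open>y, u, t\<close> the map \<open>x\<^sub>2 \<mapsto> dy/dt\<close> is
  triangular with nonzero diagonal entries \<open>g\<^sub>i\<close>, so it is inverted by forward substitution,
  \<open>x\<^sub>i\<^sub>2 = (dy\<^sub>i/dt - f\<^sub>i\<^sub>1(...)) / g\<^sub>i\<close>, one index after the other.\<close>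

definition strictly_triangular :: "('n::{finite,wellorder} \<Rightarrow> ('a, 'n) vec \<Rightarrow> 'b) \<Rightarrow> bool"
  where "strictly_triangular F \<longleftrightarrow>
    (\<forall>i x x'. (\<forall>j<i. x $ j = x' $ j) \<longrightarrow> F i x = F i x')"

lemma strictly_triangularD:
  "strictly_triangular F \<Longrightarrow> (\<And>j. j < i \<Longrightarrow> x $ j = x' $ j) \<Longrightarrow> F i x = F i x'"
  unfolding strictly_triangular_def by blast

lemma triangular_map_inj:
  fixes F :: "'n::{finite,wellorder} \<Rightarrow> ('a::field, 'n) vec \<Rightarrow> 'a"
  assumes F: "strictly_triangular F" and G: "\<And>i. G i \<noteq> 0"
  shows "inj (\<lambda>x. \<chi> i. F i x + G i * x $ i)"
proof (rule injI)
  fix x x' assume eq: "(\<chi> i. F i x + G i * x $ i) = (\<chi> i. F i x' + G i * x' $ i)"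
  have "x $ i = x' $ i" for i
  proof (induction i rule: less_induct)
    case (less i)
    then have "F i x = F i x'" by (rule strictly_triangularD[OF F])
    moreover have "F i x + G i * x $ i = F i x' + G i * x' $ i"
      using arg_cong[OF eq, of "\<lambda>v. v $ i"] by simp
    ultimately show ?case using G[of i] by simp
  qed
  then show "x = x'" by (simp add: vec_eq_iff)
qed

lemma triangular_map_surj:
  fixes F :: "'n::{finite,wellorder} \<Rightarrow> ('a::field, 'n) vec \<Rightarrow> 'a"
  assumes F: "strictly_triangular F" and G: "\<And>i. G i \<noteq> 0"
  shows "surj (\<lambda>x. \<chi> i. F i x + G i * x $ i)"
proof (unfold surj_def, intro allI)
  fix z :: "('a, 'n) vec"
  have "\<exists>x. \<forall>j\<in>S. z $ j = F j x + G j * x $ j" for S :: "'n set"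
    using finite [of S]
  proof (induction rule: finite_linorder_max_induct)
    case empty
    show ?case by simp
  next
    case (insert i S)
    then obtain x where x: "\<forall>j\<in>S. z $ j = F j x + G j * x $ j" by blast
    define x' where "x' = (\<chi> k. if k = i then (z $ i - F i x) / G i else x $ k)"
    have x'_other: "x' $ k = x $ k" if "k \<noteq> i" for k
      using that by (simp add: x'_def)
    have F_x': "F j x' = F j x" if "j \<le> i" for j
      by (rule strictly_triangularD[OF F]) (metis x'_other that leD le_less_trans)
    have "z $ i = F i x' + G i * x' $ i"
      using F_x'[of i] G[of i] by (simp add: x'_def)
    moreover have "z $ j = F j x' + G j * x' $ j" if "j \<in> S" for j
    proof -
      have "j < i" using insert.hyps(2) that by blast
      then show ?thesis using x that F_x'[of j] x'_other[of j] by simp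
    qed
    ultimately show ?case by blast
  qed
  from this[of UNIV] obtain x where "\<forall>j. z $ j = F j x + G j * x $ j" by blast
  then show "\<exists>x. z = (\<chi> i. F i x + G i * x $ i)" by (auto simp: vec_eq_iff)
qed

lemma triangular_map_bij:
  fixes F :: "'n::{finite,wellorder} \<Rightarrow> ('a::field, 'n) vec \<Rightarrow> 'a"
  assumes "strictly_triangular F" and "\<And>i. G i \<noteq> 0"
  shows "bij (\<lambda>x. \<chi> i. F i x + G i * x $ i)"
  using triangular_map_inj[OF assms] triangular_map_surj[OF assms] by (rule bijI)

lemma bij_fibrewise:
  assumes "\<And>y. bij (h y)"
  shows "bij (\<lambda>(y, x). (y, h y x))"
proof (rule bijI)
  show "inj (\<lambda>(y, x). (y, h y x))"
  proof (rule injI, clarsimp)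
    fix y x x' assume "h y x = h y x'"
    with bij_is_inj[OF assms] show "x = x'" by (rule injD)
  qed
  show "surj (\<lambda>(y, x). (y, h y x))"
  proof (unfold surj_def, intro allI)
    fix p :: "'a \<times> 'c"
    from assms obtain x where "snd p = h (fst p) x" by (rule bij_pointE)
    then show "\<exists>q. p = (case q of (y, x) \<Rightarrow> (y, h y x))"
      by (intro exI[of _ "(fst p, x)"]) (simp add: prod_eq_iff)
  qed
qed

theorem proposition1:
  fixes f1 :: "'n::{finite,wellorder} \<Rightarrow> (real, 'n) vec \<Rightarrow> (real, 'm::finite) vec \<Rightarrow> (real, 'n) vec \<Rightarrow> real"
    and f2 :: "'n \<Rightarrow> (real, 'n) vec \<times> (real, 'n) vec \<Rightarrow> (real, 'm) vec \<Rightarrow> real set"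
    and g :: "'n \<Rightarrow> (real, 'n) vec \<Rightarrow> (real, 'm) vec \<Rightarrow> real \<Rightarrow> real"
    and \<delta> :: "'n \<Rightarrow> (real, 'n) vec \<times> (real, 'n) vec \<Rightarrow> (real, 'm) vec \<Rightarrow> (real, 'n) vec \<Rightarrow> real \<Rightarrow> real"
    and gm gM :: "'n \<Rightarrow> real"
  assumes "CARD('n) \<ge> 2"
    and "\<forall>i y u x2 x2'. (\<forall>j. j < i \<longrightarrow> x2 $ j = x2' $ j) \<longrightarrow> f1 i y u x2 = f1 i y u x2'"
    and "\<forall>i. continuous_on UNIV (\<lambda>(y, u, x2). f1 i y u x2)"
    and "\<forall>i. continuous_on UNIV (\<lambda>(y, u, t). g i y u t)"
    and "\<forall>i. 0 < gm i"
    and "\<forall>i y u t. gm i \<le> g i y u t \<and> g i y u t \<le> gM i"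
    and "\<forall>i x u. f2 i x u \<noteq> {}"
  shows "globally_strongly_observable (sys_rhs f1 f2 g \<delta>)"
proof -
  define \<Phi> where "\<Phi> x u t = (fst x, \<chi> i. f1 i (fst x) u (snd x) + g i (fst x) u t * snd x $ i)"
    for x :: "(real, 'n) vec \<times> (real, 'n) vec" and u t
  have output_derivative: "(fst x, fst v) = \<Phi> x u t" if "v \<in> sys_rhs f1 f2 g \<delta> x u w t" for x u w t v
    using that by (auto simp: sys_rhs_def \<Phi>_def vec_eq_iff)
  have "bij (\<lambda>x. \<Phi> x u t)" for u t
  proof -
    have "strictly_triangular (\<lambda>i. f1 i y u)" for y
      using assms(2) by (auto simp: strictly_triangular_def)
    moreover have "g i y u t \<noteq> 0" for i y
      using assms(5,6) by (metis less_le_trans less_irrefl)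
    ultimately have "bij (\<lambda>(y, x2). (y, \<chi> i. f1 i y u x2 + g i y u t * x2 $ i))"
      by (intro bij_fibrewise triangular_map_bij)
    then show ?thesis by (simp add: \<Phi>_def case_prod_beta')
  qed
  with output_derivative show ?thesis
    unfolding globally_strongly_observable_def by blast
qed

end
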